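(* Let $-\frac1n<\alpha<0$. There exist constants $C\in\mathbb{R}$, $\alpha_1\in(0,-\alpha n)$ and $\alpha_2\in(-\alpha n,1)$ such that for every $\varrho\in\mathcal{P}_1(\mathbb{R}^n)$, $$\mathcal{F}_\alpha(\varrho)\ \ge\ C-\Big(\int_{\mathbb{R}^n}|x|\,d\varrho(x)\Big)^{\alpha_1}-\Big(\int_{\mathbb{R}^n}|x|\,d\varrho(x)\Big)^{\alpha_2}.$$
   Context: $\mathcal{P}_1(\mathbb{R}^n)$ is the set of probability measures on $\mathbb{R}^n$ with finite first moment. Writing the Lebesgue decomposition $\varrho=\rho\,dx+\varrho^s$ ($\varrho^s$ singular to Lebesgue measure), $\mathcal{F}_\alpha(\varrho)=-\int_{\mathbb{R}^n}\rho(x)^{\frac{1}{1-\alpha}}dx$. *)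

theory Defs
  imports "HOL-Probability.Probability"
begin

text \<open>Probability measures on R^n (R^n = euclidean_space 'a, n = DIM('a)) with finite first moment.\<close>
definition P1 :: "'a::euclidean_space measure \<Rightarrow> bool" where
  "P1 M \<longleftrightarrow> prob_space M \<and> sets M = sets borel \<and> integrable M (\<lambda>x. norm x)"

definition lebesgue_decomp ::
  "'a::euclidean_space measure \<Rightarrow> ('a \<Rightarrow> real) \<Rightarrow> 'a measure \<Rightarrow> bool" where
  "lebesgue_decomp M \<rho> S \<longleftrightarrow>
     \<rho> \<in> borel_measurable borel \<and> (\<forall>x. 0 \<le> \<rho> x) \<and>
     sets S = sets borel \<and>
     (\<exists>N\<in>sets borel. emeasure lborel N = 0 \<and> emeasure S (UNIV - N) = 0) \<and>
     (\<forall>A\<in>sets borel. emeasure M A = (\<integral>\<^sup>+x\<in>A. ennreal (\<rho> x) \<partial>lborel) + emeasure S A)"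

text \<open>F_alpha evaluated on the absolutely continuous density rho (value in extended reals).\<close>
definition F_alpha :: "real \<Rightarrow> ('a::euclidean_space \<Rightarrow> real) \<Rightarrow> ereal" where
  "F_alpha \<alpha> \<rho> = - enn2ereal (\<integral>\<^sup>+x. ennreal (\<rho> x powr (1 / (1 - \<alpha>))) \<partial>lborel)"

end

theory Submission
  imports Defs
begin

text \<open>
  Put \<open>p = 1 / (1 - \<alpha>) \<in> (0, 1)\<close> and \<open>w x = 1 + |x|\<close>. Young's inequality, applied to
  \<open>\<rho>^p = (\<rho> w)^p w^-p\<close>, bounds \<open>\<integral> \<rho>^p\<close> by a combination of \<open>\<integral> \<rho> w \<le> 1 + m\<close>, where \<open>m\<close> is
  the first moment, and of \<open>\<integral> w^(-p/(1-p)) = \<integral> w^(1/\<alpha>)\<close>, which is finite because \<open>-1/\<alpha> > n\<close>.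
  Scaling the two terms optimally gives \<open>\<integral> \<rho>^p \<le> K (1 + m)^p\<close>, and since \<open>p < 1\<close> this is at
  most \<open>D + m^\<alpha>\<^sub>2\<close> for any \<open>\<alpha>\<^sub>2 \<in> (max p (-\<alpha> n), 1)\<close>.
\<close>

lemma powr_le_weighted_Young:
  fixes p l r w :: real
  assumes p: "0 < p" "p < 1" and "0 < l" "0 \<le> r" "0 < w"
  shows "r powr p \<le> p * (l * r * w) + (1 - p) * (l * w) powr (- (p / (1 - p)))"
proof (cases "r = 0")
  case True
  with assms show ?thesis by simp
next
  case False
  with assms have "0 < l * r * w" by simp
  have "(l * r * w) powr p * ((l * w) powr (- (p / (1 - p)))) powr (1 - p)
          \<le> p * (l * r * w) + (1 - p) * (l * w) powr (- (p / (1 - p)))"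
    using assms \<open>0 < l * r * w\<close> by (intro Youngs_inequality_0) auto
  moreover have "(l * r * w) powr p * ((l * w) powr (- (p / (1 - p)))) powr (1 - p) = r powr p"
  proof -
    have "((l * w) powr (- (p / (1 - p)))) powr (1 - p) = (l * w) powr (- p)"
      using p by (simp add: powr_powr)
    then show ?thesis
      using assms by (simp add: powr_mult powr_minus field_simps)
  qed
  ultimately show ?thesis by simp
qed

lemma nn_integral_powr_le_Young:
  fixes \<rho> w :: "'a \<Rightarrow> real" and N :: "'a measure"
  assumes p: "0 < p" "p < 1"
    and \<rho>: "\<And>x. 0 \<le> \<rho> x" "\<rho> \<in> borel_measurable N"
    and w: "\<And>x. 0 < w x" "w \<in> borel_measurable N"
    and B: "(\<integral>\<^sup>+x. ennreal (\<rho> x * w x) \<partial>N) \<le> ennreal B" "0 < B"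
    and I: "(\<integral>\<^sup>+x. ennreal (w x powr (- (p / (1 - p)))) \<partial>N) \<le> ennreal I" "0 \<le> I"
  shows "(\<integral>\<^sup>+x. ennreal (\<rho> x powr p) \<partial>N) \<le> ennreal ((p + (1 - p) * I) * B powr p)"
proof -
  define s where "s = p / (1 - p)"
  \<comment> \<open>the weight that balances both Young terms at the scale \<open>B\<close>\<close>
  define l where "l = B powr (p - 1)"
  have "0 < l" using B by (simp add: l_def)
  have l_B: "l * B = B powr p"
    using B powr_mult_base[of B "p - 1"] by (simp add: l_def mult.commute)
  have "(p - 1) * (- s) = p"
    using p by (simp add: s_def field_simps)
  then have l_s: "l powr (- s) = B powr p"
    by (simp add: l_def powr_powr)
  note [measurable] = \<rho>(2) w(2)
  have pointwise: "ennreal (\<rho> x powr p)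
      \<le> ennreal (p * l) * ennreal (\<rho> x * w x) + ennreal ((1 - p) * l powr (- s)) * ennreal (w x powr (- s))"
    for x
  proof -
    have "\<rho> x powr p \<le> p * l * (\<rho> x * w x) + (1 - p) * l powr (- s) * w x powr (- s)"
      using powr_le_weighted_Young[OF p \<open>0 < l\<close> \<rho>(1) w(1), of x]
      by (simp add: s_def powr_mult mult_ac)
    then show ?thesis
      using p \<open>0 < l\<close> \<rho>(1)[of x] w(1)[of x]
      by (simp add: ennreal_leI flip: ennreal_mult ennreal_plus)
  qed
  have "(\<integral>\<^sup>+x. ennreal (\<rho> x powr p) \<partial>N)
      \<le> (\<integral>\<^sup>+x. ennreal (p * l) * ennreal (\<rho> x * w x) + ennreal ((1 - p) * l powr (- s)) * ennreal (w x powr (- s)) \<partial>N)"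
    by (intro nn_integral_mono pointwise)
  also have "\<dots> = ennreal (p * l) * (\<integral>\<^sup>+x. ennreal (\<rho> x * w x) \<partial>N)
      + ennreal ((1 - p) * l powr (- s)) * (\<integral>\<^sup>+x. ennreal (w x powr (- s)) \<partial>N)"
    by (simp add: nn_integral_add nn_integral_cmult)
  also have "\<dots> \<le> ennreal (p * l) * ennreal B + ennreal ((1 - p) * l powr (- s)) * ennreal I"
    using B I by (intro add_mono mult_left_mono) (auto simp: s_def)
  also have "\<dots> = ennreal (p * (l * B) + (1 - p) * l powr (- s) * I)"
    using p B I \<open>0 < l\<close> by (simp add: mult_ac flip: ennreal_mult ennreal_plus)
  also have "p * (l * B) + (1 - p) * l powr (- s) * I = (p + (1 - p) * I) * B powr p"
    unfolding l_B l_s by (simp add: algebra_simps)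
  finally show ?thesis .
qed

lemma ex_power2_ivl:
  fixes t :: real
  assumes "1 \<le> t"
  obtains k :: nat where "2 ^ k \<le> t" "t < 2 ^ (k + 1)"
proof -
  define k where "k = nat \<lfloor>log 2 t\<rfloor>"
  have "0 \<le> log 2 t" using assms by simp
  then have "\<lfloor>log 2 t\<rfloor> = int k" unfolding k_def by simp
  then have "2 powr real k \<le> t \<and> t < 2 powr (real k + 1)"
    using assms floor_log_eq_powr_iff[of t 2 "int k"] by simp
  then show ?thesis
    using that[of k] by (simp add: powr_add powr_realpow)
qed

lemma dyadic_powr_geometric:
  fixes n :: nat and q :: real and k :: nat
  shows "2 powr (- (k * q)) * (2 ^ (k + 1)) ^ n = 2 ^ n * (2 powr (n - q)) ^ k"
proof -
  have "(2 ^ (k + 1)) ^ n = (2::real) powr real ((k + 1) * n)"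
    by (simp only: power_mult powr_realpow zero_less_numeral)
  then have "2 powr (- (k * q)) * (2 ^ (k + 1)) ^ n = (2::real) powr (- (k * q) + real ((k + 1) * n))"
    by (simp only: powr_add)
  also have "- (k * q) + real ((k + 1) * n) = n + k * (n - q)"
    by (simp add: algebra_simps)
  also have "(2::real) powr \<dots> = 2 ^ n * (2 powr (n - q)) ^ k"
    by (simp add: powr_add powr_realpow powr_power)
  finally show ?thesis .
qed

lemma nn_integral_one_plus_norm_powr_finite:
  fixes q :: real
  assumes q: "real DIM('a::euclidean_space) < q"
  shows "(\<integral>\<^sup>+x. ennreal ((1 + norm (x::'a)) powr (- q)) \<partial>lborel) < \<infinity>"
proof -
  define n where "n = DIM('a)"
  define V where "V = unit_ball_vol (real n)"
  define f where "f k x = ennreal (2 powr (- (k * q))) * indicator (ball (0::'a) (2 ^ (k + 1))) x"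
    for k x
  have "0 < q" using q by (smt (verit) of_nat_0_le_iff)
  have dyadic: "ennreal ((1 + norm x) powr (- q)) \<le> (\<Sum>k. f k x)" for x :: 'a
  proof -
    obtain k :: nat where k: "2 ^ k \<le> 1 + norm x" "1 + norm x < 2 ^ (k + 1)"
      using ex_power2_ivl[of "1 + norm x"] by auto
    have "(1 + norm x) powr (- q) \<le> (2 ^ k) powr (- q)"
      using k \<open>0 < q\<close> by (intro powr_mono2') auto
    also have "\<dots> = 2 powr (- (k * q))"
      by (simp add: powr_powr flip: powr_realpow)
    finally have "ennreal ((1 + norm x) powr (- q)) \<le> f k x"
      using k by (simp add: f_def ennreal_leI)
    also have "f k x \<le> (\<Sum>k. f k x)"
      using sum_le_suminf[of "\<lambda>k. f k x" "{k}"] by (simp add: summableI)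
    finally show ?thesis .
  qed
  have f_measurable: "f k \<in> borel_measurable lborel" for k
    unfolding f_def by (intro borel_measurable_times_ennreal borel_measurable_indicator) auto
  have "summable (\<lambda>k. V * 2 ^ n * (2 powr (n - q)) ^ k)"
    using q by (intro summable_mult summable_geometric) (simp add: n_def powr_less_one)
  have "(\<integral>\<^sup>+x. ennreal ((1 + norm (x::'a)) powr (- q)) \<partial>lborel) \<le> (\<integral>\<^sup>+x. (\<Sum>k. f k x) \<partial>lborel)"
    by (intro nn_integral_mono dyadic)
  also have "\<dots> = (\<Sum>k. \<integral>\<^sup>+x. f k x \<partial>lborel)"
    by (rule nn_integral_suminf[OF f_measurable])
  also have "\<dots> = (\<Sum>k. ennreal (V * 2 ^ n * (2 powr (n - q)) ^ k))"
  proof (intro suminf_cong)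
    fix k :: nat
    have "(\<integral>\<^sup>+x. f k x \<partial>lborel) = ennreal (2 powr (- (k * q))) * emeasure lborel (ball (0::'a) (2 ^ (k + 1)))"
      unfolding f_def by (rule nn_integral_cmult_indicator) simp
    also have "\<dots> = ennreal (2 powr (- (k * q)) * (2 ^ (k + 1)) ^ n * V)"
      by (simp add: emeasure_ball V_def n_def flip: ennreal_mult)
    also have "\<dots> = ennreal (V * 2 ^ n * (2 powr (n - q)) ^ k)"
      by (subst dyadic_powr_geometric) (simp add: ac_simps)
    finally show "(\<integral>\<^sup>+x. f k x \<partial>lborel) = ennreal (V * 2 ^ n * (2 powr (n - q)) ^ k)" .
  qed
  also have "\<dots> = ennreal (\<Sum>k. V * 2 ^ n * (2 powr (n - q)) ^ k)"
    using \<open>summable _\<close> by (intro suminf_ennreal2) (auto simp: V_def)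
  finally show ?thesis
    by (simp add: order_le_less_trans)
qed

lemma density_le_of_lebesgue_decomp:
  assumes decomp: "lebesgue_decomp M \<rho> S" and sets_M: "sets M = sets borel"
  shows "density lborel (\<lambda>x. ennreal (\<rho> x)) \<le> M"
proof -
  let ?N = "density lborel (\<lambda>x. ennreal (\<rho> x))"
  have \<rho>: "\<rho> \<in> borel_measurable borel"
    and eq: "\<And>A. A \<in> sets borel \<Longrightarrow> emeasure M A = (\<integral>\<^sup>+x\<in>A. ennreal (\<rho> x) \<partial>lborel) + emeasure S A"
    using decomp unfolding lebesgue_decomp_def by auto
  have sets_N: "sets ?N = sets M"
    using sets_M by simp
  have "emeasure ?N A \<le> emeasure M A" for A
  proof (cases "A \<in> sets borel")
    case True
    then show ?thesis
      using \<rho> eq[OF True] by (simp add: emeasure_density)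
  next
    case False
    then show ?thesis
      using sets_N sets_M by (simp add: emeasure_notin_sets)
  qed
  then show ?thesis
    using sets_N sets_eq_imp_space_eq[OF sets_N] by (auto simp: le_measure_iff le_fun_def)
qed

lemma nn_integral_density_le_of_lebesgue_decomp:
  assumes decomp: "lebesgue_decomp M \<rho> S" and sets_M: "sets M = sets borel"
    and f: "f \<in> borel_measurable borel"
  shows "(\<integral>\<^sup>+x. ennreal (\<rho> x) * f x \<partial>lborel) \<le> (\<integral>\<^sup>+x. f x \<partial>M)"
proof -
  have \<rho>: "\<rho> \<in> borel_measurable borel"
    using decomp unfolding lebesgue_decomp_def by auto
  have "(\<integral>\<^sup>+x. ennreal (\<rho> x) * f x \<partial>lborel) = (\<integral>\<^sup>+x. f x \<partial>density lborel (\<lambda>x. ennreal (\<rho> x)))"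
    using \<rho> f by (simp add: nn_integral_density)
  also have "\<dots> \<le> (\<integral>\<^sup>+x. f x \<partial>M)"
    using sets_M density_le_of_lebesgue_decomp[OF decomp sets_M]
    by (intro nn_integral_mono_measure) auto
  finally show ?thesis .
qed

lemma nn_integral_density_powr_le_first_moment:
  fixes M :: "'a::euclidean_space measure"
  assumes M: "P1 M" and decomp: "lebesgue_decomp M \<rho> S" and p: "0 < p" "p < 1"
    and I: "(\<integral>\<^sup>+x. ennreal ((1 + norm (x::'a)) powr (- (p / (1 - p)))) \<partial>lborel) \<le> ennreal I" "0 \<le> I"
  shows "(\<integral>\<^sup>+x. ennreal (\<rho> x powr p) \<partial>lborel) \<le> ennreal ((p + (1 - p) * I) * (1 + (\<integral>x. norm x \<partial>M)) powr p)"
proof -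
  interpret prob_space M
    using M by (simp add: P1_def)
  have sets_M: "sets M = sets borel" and moment: "integrable M (\<lambda>x. norm x)"
    using M by (simp_all add: P1_def)
  have \<rho>: "\<And>x. 0 \<le> \<rho> x" "\<rho> \<in> borel_measurable lborel"
    using decomp by (auto simp: lebesgue_decomp_def)
  have "(\<integral>\<^sup>+x. ennreal (\<rho> x * (1 + norm x)) \<partial>lborel) = (\<integral>\<^sup>+x. ennreal (\<rho> x) * ennreal (1 + norm x) \<partial>lborel)"
    using \<rho>(1) by (simp add: ennreal_mult)
  also have "\<dots> \<le> (\<integral>\<^sup>+x. ennreal (1 + norm x) \<partial>M)"
    by (rule nn_integral_density_le_of_lebesgue_decomp[OF decomp sets_M]) simp
  also have "\<dots> = ennreal (\<integral>x. 1 + norm x \<partial>M)"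
    using moment by (intro nn_integral_eq_integral) auto
  also have "(\<integral>x. 1 + norm x \<partial>M) = 1 + (\<integral>x. norm x \<partial>M)"
    using moment by (subst Bochner_Integration.integral_add) (auto simp: prob_space)
  finally have first_moment: "(\<integral>\<^sup>+x. ennreal (\<rho> x * (1 + norm x)) \<partial>lborel) \<le> ennreal (1 + (\<integral>x. norm x \<partial>M))" .
  show ?thesis
    using \<rho> p I first_moment
    by (intro nn_integral_powr_le_Young[where w = "\<lambda>x. 1 + norm x"]) (auto intro: add_pos_nonneg)
qed

lemma powr_le_const_plus_larger_powr:
  fixes K p a :: real
  assumes K: "0 \<le> K" and p: "0 < p" "p < a"
  obtains D where "\<And>m. 0 \<le> m \<Longrightarrow> K * (1 + m) powr p \<le> D + m powr a"
proof
  define T where "T = max 1 ((K * 2 powr p) powr (1 / (a - p)))"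
  fix m :: real
  assume m: "0 \<le> m"
  show "K * (1 + m) powr p \<le> K * (1 + T) powr p + m powr a"
  proof (cases "m \<le> T")
    case True
    then have "K * (1 + m) powr p \<le> K * (1 + T) powr p"
      using K m p by (intro mult_left_mono powr_mono2) auto
    then show ?thesis
      using powr_ge_zero[of m a] by linarith
  next
    case False
    then have "1 \<le> m" by (simp add: T_def)
    have "K * 2 powr p = ((K * 2 powr p) powr (1 / (a - p))) powr (a - p)"
      using K p by (simp add: powr_powr)
    also have "\<dots> \<le> m powr (a - p)"
      using False p by (intro powr_mono2) (auto simp: T_def)
    finally have absorb: "K * 2 powr p \<le> m powr (a - p)" .
    have "K * (1 + m) powr p \<le> K * (2 * m) powr p"
      using K p \<open>1 \<le> m\<close> by (intro mult_left_mono powr_mono2) auto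
    also have "\<dots> = K * 2 powr p * m powr p"
      using m by (simp add: powr_mult)
    also have "\<dots> \<le> m powr (a - p) * m powr p"
      using absorb by (intro mult_right_mono) auto
    also have "\<dots> = m powr a"
      using \<open>1 \<le> m\<close> by (simp flip: powr_add)
    finally show ?thesis
      using K by (simp add: add_increasing)
  qed
qed

lemma F_alpha_ge:
  assumes "(\<integral>\<^sup>+x. ennreal (\<rho> x powr (1 / (1 - \<alpha>))) \<partial>lborel) \<le> ennreal c" "0 \<le> c"
  shows "- ereal c \<le> F_alpha \<alpha> \<rho>"
proof -
  have "enn2ereal (\<integral>\<^sup>+x. ennreal (\<rho> x powr (1 / (1 - \<alpha>))) \<partial>lborel) \<le> ereal c"
    using assms less_eq_ennreal.rep_eq by fastforce
  then show ?thesis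
    unfolding F_alpha_def by (simp only: ereal_minus_le_minus)
qed

lemma F_alpha_ge_first_moment_powr:
  fixes \<alpha> a :: real
  assumes "- 1 / real DIM('a::euclidean_space) < \<alpha>" "\<alpha> < 0" "1 / (1 - \<alpha>) < a"
  obtains D :: real where "\<And>(M::'a measure) \<rho> S. P1 M \<Longrightarrow> lebesgue_decomp M \<rho> S \<Longrightarrow>
      - ereal (D + (\<integral>x. norm x \<partial>M) powr a) \<le> F_alpha \<alpha> \<rho>"
proof -
  define p where "p = 1 / (1 - \<alpha>)"
  have p: "0 < p" "p < 1"
    using assms(2) by (auto simp: p_def field_simps)
  have "p / (1 - p) = - 1 / \<alpha>"
    using assms(2) by (simp add: p_def field_simps)
  moreover have "real DIM('a) < - 1 / \<alpha>"
    using assms(1,2) by (simp add: field_simps)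
  ultimately have "real DIM('a) < p / (1 - p)"
    by simp
  from nn_integral_one_plus_norm_powr_finite[OF this]
  obtain I where I: "(\<integral>\<^sup>+x. ennreal ((1 + norm (x::'a)) powr (- (p / (1 - p)))) \<partial>lborel) = ennreal I" "0 \<le> I"
    by (auto simp: less_top_ennreal)
  obtain D where D: "\<And>m. 0 \<le> m \<Longrightarrow> (p + (1 - p) * I) * (1 + m) powr p \<le> D + m powr a"
    using powr_le_const_plus_larger_powr[of "p + (1 - p) * I" p a] p I(2) assms(3) by (auto simp: p_def)
  have "p + (1 - p) * I \<le> D"
    using D[of 0] by simp
  then have "0 \<le> D"
    using p I(2) mult_nonneg_nonneg[of "1 - p" I] by linarith
  show ?thesis
  proof (rule that)
    fix M :: "'a measure" and \<rho> S
    assume "P1 M" "lebesgue_decomp M \<rho> S"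
    let ?m = "\<integral>x. norm x \<partial>M"
    have "(\<integral>\<^sup>+x. ennreal (\<rho> x powr p) \<partial>lborel) \<le> ennreal ((p + (1 - p) * I) * (1 + ?m) powr p)"
      using \<open>P1 M\<close> \<open>lebesgue_decomp M \<rho> S\<close> p I(1)[THEN eq_refl] I(2)
      by (rule nn_integral_density_powr_le_first_moment)
    also have "\<dots> \<le> ennreal (D + ?m powr a)"
      by (intro ennreal_leI D) simp
    finally show "- ereal (D + ?m powr a) \<le> F_alpha \<alpha> \<rho>"
      using \<open>0 \<le> D\<close> unfolding p_def by (intro F_alpha_ge) auto
  qed
qed

theorem lemma4p8:
  fixes \<alpha> :: real
  assumes "- 1 / real DIM('a::euclidean_space) < \<alpha>" and "\<alpha> < 0"
  shows "\<exists>C::real. \<exists>\<alpha>1 \<alpha>2::real.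
           0 < \<alpha>1 \<and> \<alpha>1 < - \<alpha> * real DIM('a) \<and>
           - \<alpha> * real DIM('a) < \<alpha>2 \<and> \<alpha>2 < 1 \<and>
           (\<forall>(M::'a measure) \<rho> S. P1 M \<longrightarrow> lebesgue_decomp M \<rho> S \<longrightarrow>
              F_alpha \<alpha> \<rho> \<ge> ereal (C - (\<integral>x. norm x \<partial>M) powr \<alpha>1 - (\<integral>x. norm x \<partial>M) powr \<alpha>2))"
proof -
  define n where "n = real DIM('a)"
  define \<alpha>2 where "\<alpha>2 = (max (1 / (1 - \<alpha>)) (- \<alpha> * n) + 1) / 2"
  have \<alpha>n: "0 < - \<alpha> * n" "- \<alpha> * n < 1"
    using assms by (auto simp: n_def field_simps mult_neg_pos)
  have "1 / (1 - \<alpha>) < 1"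
    using assms(2) by (simp add: field_simps)
  then have \<alpha>2: "1 / (1 - \<alpha>) < \<alpha>2" "- \<alpha> * n < \<alpha>2" "\<alpha>2 < 1"
    using \<alpha>n by (auto simp: \<alpha>2_def)
  obtain D where D: "\<And>(M::'a measure) \<rho> S. P1 M \<Longrightarrow> lebesgue_decomp M \<rho> S \<Longrightarrow>
      - ereal (D + (\<integral>x. norm x \<partial>M) powr \<alpha>2) \<le> F_alpha \<alpha> \<rho>"
    using F_alpha_ge_first_moment_powr[OF assms \<alpha>2(1)] by blast
  show ?thesis
  proof (rule exI[of _ "- D"], rule exI[of _ "- \<alpha> * n / 2"], rule exI[of _ \<alpha>2], intro conjI allI impI)
    fix M :: "'a measure" and \<rho> S
    assume "P1 M" "lebesgue_decomp M \<rho> S"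
    let ?m = "\<integral>x. norm x \<partial>M"
    have "ereal (- D - ?m powr (- \<alpha> * n / 2) - ?m powr \<alpha>2) \<le> - ereal (D + ?m powr \<alpha>2)"
      by simp
    with D[OF \<open>P1 M\<close> \<open>lebesgue_decomp M \<rho> S\<close>]
    show "ereal (- D - ?m powr (- \<alpha> * n / 2) - ?m powr \<alpha>2) \<le> F_alpha \<alpha> \<rho>"
      by (rule order_trans[rotated])
  qed (use \<alpha>n \<alpha>2 in \<open>simp_all add: n_def\<close>)
qed

end
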